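(* Let $1\le d<n$, $r=d(n-d)$, and let $\mathfrak C:\underline i_r>\underline i_{r-1}>\cdots>\underline i_0$ be a maximal chain in $I(d,n)$. Then there exists $0\le k<r$ such that $\underline i_h$ does not contain $n$ for all $h\le k$ and $\underline i_h$ contains $n$ for all $h>k$. Moreover, if $\underline i_k=i_{1,k}i_{2,k}\cdots i_{d,k}$, then $i_{d,k}=n-1$ and $\underline i_{k+1}=i_{1,k}\cdots i_{d-1,k}\,n$.
   Context: $I(d,n)$ is the set of $d$-element subsets of $\{1,\dots,n\}$, written as increasing sequences $i_1i_2\cdots i_d$, partially ordered by $\underline i\le \underline j$ iff $i_k\le j_k$ for all $k$. A maximal chain is a totally ordered subset maximal with respect to inclusion; it has the form $\underline i_r>\cdots>\underline i_0$ with $\underline i_0=12\cdots d$, $\underline i_r=(n-d+1)\cdots n$, each relation a cover. *)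

theory Defs
  imports Main
begin

text \<open>I(d,n): d-element subsets of {1..n}, viewed as increasing sequences.\<close>
definition Idn :: "nat \<Rightarrow> nat \<Rightarrow> nat set set" where
  "Idn d n = {A. A \<subseteq> {1..n} \<and> card A = d}"

definition idx_le :: "nat set \<Rightarrow> nat set \<Rightarrow> bool" where
  "idx_le A B = list_all2 (\<le>) (sorted_list_of_set A) (sorted_list_of_set B)"

definition idx_lt :: "nat set \<Rightarrow> nat set \<Rightarrow> bool" where
  "idx_lt A B = (idx_le A B \<and> A \<noteq> B)"

definition is_chain_in :: "nat \<Rightarrow> nat \<Rightarrow> nat set set \<Rightarrow> bool" where
  "is_chain_in d n C = (C \<subseteq> Idn d n \<and> (\<forall>A\<in>C. \<forall>B\<in>C. idx_le A B \<or> idx_le B A))"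

definition is_maximal_chain :: "nat \<Rightarrow> nat \<Rightarrow> nat set set \<Rightarrow> bool" where
  "is_maximal_chain d n C = (is_chain_in d n C \<and>
     (\<forall>C'. is_chain_in d n C' \<and> C \<subseteq> C' \<longrightarrow> C' = C))"

end

theory Submission
  imports Defs
begin

text \<open>The weight \<Sum>A of a d-subset strictly increases along idx_lt, because the
sorted lists dominate each other componentwise and differ. On I(d,n) the weight ranges
from d(d+1)/2 to d(2n-d+1)/2, an interval of length exactly r = d(n-d). So a chain
of r strict steps starts at the minimal weight (whose sets avoid n), ends at the maximal
weight (whose sets contain n), and every step raises the weight by exactly one. The largest
entry never decreases, so once n appears it stays. At the step where it appears the last
entry grows while the weight grows by one, hence the last entry moves from n - 1 to n
and all other entries are unchanged. Of the maximality of the chain only the inclusion in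
I(d,n) is used.\<close>

lemma sum_list_sorted_list_of_set:
  "finite A \<Longrightarrow> sum_list (sorted_list_of_set A) = \<Sum>A"
  using sum_list_distinct_conv_sum_set[of "sorted_list_of_set A" id] by simp

lemma last_sorted_list_of_set:
  fixes A :: "'a::linorder set"
  assumes "finite A" "A \<noteq> {}"
  shows "last (sorted_list_of_set A) = Max A"
proof -
  let ?xs = "sorted_list_of_set A"
  have "?xs \<noteq> []" and set_xs: "set ?xs = A" using assms by auto
  then have "?xs = butlast ?xs @ [last ?xs]" by simp
  then have "sorted (butlast ?xs @ [last ?xs])" by (metis sorted_sorted_list_of_set)
  then have "\<forall>x\<in>set ?xs. x \<le> last ?xs"
    by (subst \<open>?xs = _\<close>) (auto simp: sorted_append)
  moreover have "last ?xs \<in> A" using \<open>?xs \<noteq> []\<close> set_xs last_in_set by blast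
  ultimately show ?thesis using assms set_xs by (intro Max_eqI[symmetric]) auto
qed

lemma nth_sorted_list_of_set_card_Max:
  fixes A :: "'a::linorder set"
  assumes "finite A" "A \<noteq> {}"
  shows "sorted_list_of_set A ! (card A - 1) = Max A"
  using last_sorted_list_of_set[OF assms] assms by (simp add: last_conv_nth)

lemma list_all2_last: "list_all2 P xs ys \<Longrightarrow> xs \<noteq> [] \<Longrightarrow> P (last xs) (last ys)"
  by (induction rule: list_all2_induct) auto

lemma list_all2_le_sum_list_le:
  fixes xs ys :: "'a::ordered_comm_monoid_add list"
  shows "list_all2 (\<le>) xs ys \<Longrightarrow> sum_list xs \<le> sum_list ys"
  by (induction rule: list_all2_induct) (auto intro: add_mono)

lemma list_all2_le_sum_list_eq_imp_eq:
  fixes xs ys :: "'a::ordered_cancel_comm_monoid_add list"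
  shows "list_all2 (\<le>) xs ys \<Longrightarrow> sum_list xs = sum_list ys \<Longrightarrow> xs = ys"
proof (induction rule: list_all2_induct)
  case (Cons x xs y ys)
  have "sum_list xs \<le> sum_list ys" using Cons.hyps(2) by (rule list_all2_le_sum_list_le)
  with Cons have "x = y"
    by (metis add_less_le_mono antisym_conv2 order.irrefl sum_list.Cons)
  with Cons show ?case by simp
qed simp

lemma list_all2_le_sum_list_Suc:
  fixes xs ys :: "nat list"
  assumes le: "list_all2 (\<le>) xs ys" and sum: "sum_list ys = Suc (sum_list xs)"
    and "xs \<noteq> []" and last: "last xs < last ys"
  shows "butlast ys = butlast xs" and "last ys = Suc (last xs)"
proof -
  have "ys \<noteq> []" using le \<open>xs \<noteq> []\<close> by auto
  obtain xs' a ys' b where xs: "xs = xs' @ [a]" and ys: "ys = ys' @ [b]"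
    using \<open>xs \<noteq> []\<close> \<open>ys \<noteq> []\<close> by (metis append_butlast_last_id)
  have le': "list_all2 (\<le>) xs' ys'"
    using le list_all2_lengthD[OF le] by (simp add: xs ys list_all2_append)
  have "a < b" using last by (simp add: xs ys)
  moreover have "sum_list ys' + b = Suc (sum_list xs' + a)" using sum by (simp add: xs ys)
  ultimately have "sum_list xs' = sum_list ys'" and "b = Suc a"
    using list_all2_le_sum_list_le[OF le'] by linarith+
  with le' show "butlast ys = butlast xs" and "last ys = Suc (last xs)"
    using list_all2_le_sum_list_eq_imp_eq by (auto simp: xs ys)
qed

lemma idx_lt_sum_less:
  assumes "finite A" "finite B" "idx_lt A B"
  shows "\<Sum>A < \<Sum>B"
proof -
  let ?xs = "sorted_list_of_set A" and ?ys = "sorted_list_of_set B"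
  have le: "list_all2 (\<le>) ?xs ?ys" using assms(3) by (simp add: idx_lt_def idx_le_def)
  have "?xs \<noteq> ?ys" using assms by (metis idx_lt_def set_sorted_list_of_set)
  then have "sum_list ?xs \<noteq> sum_list ?ys" using le list_all2_le_sum_list_eq_imp_eq by blast
  then show ?thesis
    using list_all2_le_sum_list_le[OF le] assms(1,2) by (simp add: sum_list_sorted_list_of_set)
qed

lemma idx_le_Max_le:
  fixes A B :: "nat set"
  assumes "finite A" "finite B" "A \<noteq> {}" "idx_le A B"
  shows "Max A \<le> Max B"
proof -
  let ?xs = "sorted_list_of_set A" and ?ys = "sorted_list_of_set B"
  have le: "list_all2 (\<le>) ?xs ?ys" using assms(4) by (simp add: idx_le_def)
  have "?xs \<noteq> []" using assms(1,3) by simp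
  then have "?ys \<noteq> []" using le by auto
  then have "B \<noteq> {}" by auto
  have "last ?xs \<le> last ?ys" using list_all2_last[OF le \<open>?xs \<noteq> []\<close>] .
  then show ?thesis using assms \<open>B \<noteq> {}\<close> by (simp add: last_sorted_list_of_set)
qed

lemma idx_le_sum_Suc:
  fixes A B :: "nat set"
  assumes "finite A" "finite B" "A \<noteq> {}" "idx_le A B"
    and "\<Sum>B = Suc (\<Sum>A)" and "Max A < Max B"
  shows "Max B = Suc (Max A)" and "B = set (butlast (sorted_list_of_set A)) \<union> {Suc (Max A)}"
proof -
  let ?xs = "sorted_list_of_set A" and ?ys = "sorted_list_of_set B"
  have le: "list_all2 (\<le>) ?xs ?ys" using assms(4) by (simp add: idx_le_def)
  have "?xs \<noteq> []" using assms(1,3) by simp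
  then have "?ys \<noteq> []" using le by auto
  then have "B \<noteq> {}" by auto
  have "butlast ?ys = butlast ?xs" and last: "last ?ys = Suc (last ?xs)"
    using list_all2_le_sum_list_Suc[OF le] assms \<open>?xs \<noteq> []\<close> \<open>B \<noteq> {}\<close>
    by (simp_all add: sum_list_sorted_list_of_set last_sorted_list_of_set)
  then show "Max B = Suc (Max A)" using assms(1-3) \<open>B \<noteq> {}\<close> by (simp add: last_sorted_list_of_set)
  have "?ys = butlast ?xs @ [Suc (Max A)]"
    using \<open>butlast ?ys = _\<close> last \<open>?ys \<noteq> []\<close> assms(1,3)
    by (metis append_butlast_last_id last_sorted_list_of_set)
  then show "B = set (butlast ?xs) \<union> {Suc (Max A)}"
    using assms(2) by (metis set_sorted_list_of_set set_append set_simps Un_commute)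
qed

lemma Idn_finite: "A \<in> Idn d n \<Longrightarrow> finite A"
  unfolding Idn_def by (blast intro: finite_subset[OF _ finite_atLeastAtMost])

lemma Idn_sum_lower: "A \<in> Idn d n \<Longrightarrow> d * (d + 1) \<le> 2 * \<Sum>A"
proof (induction d arbitrary: A)
  case (Suc d)
  have fin: "finite A" using Suc.prems by (rule Idn_finite)
  have "A \<subseteq> {1..n}" and card: "card A = Suc d" using Suc.prems by (auto simp: Idn_def)
  then have "A \<noteq> {}" by auto
  define m where "m = Max A"
  have "m \<in> A" using fin \<open>A \<noteq> {}\<close> by (simp add: m_def)
  have "A \<subseteq> {1..m}" using fin \<open>A \<subseteq> {1..n}\<close> by (auto simp: m_def)
  then have "Suc d \<le> m" using card card_mono[of "{1..m}" A] by simp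
  have "A - {m} \<in> Idn d n" using Suc.prems \<open>m \<in> A\<close> fin by (auto simp: Idn_def)
  then have "d * (d + 1) \<le> 2 * \<Sum>(A - {m})" by (rule Suc.IH)
  moreover have "\<Sum>A = m + \<Sum>(A - {m})" using fin \<open>m \<in> A\<close> by (rule sum.remove)
  ultimately show ?case using \<open>Suc d \<le> m\<close> by simp
qed simp

lemma Idn_sum_upper: "A \<in> Idn d n \<Longrightarrow> 2 * \<Sum>A + d * d \<le> d * (2 * n + 1)"
proof (induction d arbitrary: A n)
  case (Suc d)
  have fin: "finite A" using Suc.prems by (rule Idn_finite)
  have "A \<subseteq> {1..n}" and card: "card A = Suc d" using Suc.prems by (auto simp: Idn_def)
  then have "A \<noteq> {}" by auto
  define m where "m = Max A"
  have "m \<in> A" using fin \<open>A \<noteq> {}\<close> by (simp add: m_def)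
  then obtain m' where m: "m = Suc m'" and "m \<le> n" using \<open>A \<subseteq> {1..n}\<close> by (cases m) auto
  have "A - {m} \<subseteq> {1..m'}"
  proof
    fix y assume "y \<in> A - {m}"
    then have "y \<le> m" "y \<noteq> m" "1 \<le> y" using fin \<open>A \<subseteq> {1..n}\<close> by (auto simp: m_def)
    then show "y \<in> {1..m'}" using m by simp
  qed
  then have "A - {m} \<in> Idn d m'" using card fin \<open>m \<in> A\<close> by (simp add: Idn_def)
  then have "2 * \<Sum>(A - {m}) + d * d \<le> d * (2 * m' + 1)" by (rule Suc.IH)
  moreover have "\<Sum>A = m + \<Sum>(A - {m})" using fin \<open>m \<in> A\<close> by (rule sum.remove)
  moreover have "d * m \<le> d * n" using \<open>m \<le> n\<close> by simp
  ultimately show ?case using \<open>m \<le> n\<close> m by (simp add: algebra_simps)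
qed (auto simp: Idn_def card_eq_0_iff dest: finite_subset)

lemma Idn_sum_min_notin:
  assumes "A \<in> Idn d n" and "2 * \<Sum>A = d * (d + 1)" and "d < n"
  shows "n \<notin> A"
proof
  assume "n \<in> A"
  then obtain d' where d: "d = Suc d'"
    using assms(1) Idn_finite[OF assms(1)] by (cases d) (auto simp: Idn_def)
  have "A - {n} \<in> Idn d' n" using assms(1) \<open>n \<in> A\<close> d by (auto simp: Idn_def)
  then have "d' * (d' + 1) \<le> 2 * \<Sum>(A - {n})" by (rule Idn_sum_lower)
  moreover have "\<Sum>A = n + \<Sum>(A - {n})"
    using Idn_finite[OF assms(1)] \<open>n \<in> A\<close> by (rule sum.remove)
  ultimately show False using assms(2,3) d by simp
qed

lemma Idn_sum_max_mem:
  assumes "A \<in> Idn d n" and "2 * \<Sum>A + d * d = d * (2 * n + 1)" and "0 < d"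
  shows "n \<in> A"
proof (rule ccontr)
  assume "n \<notin> A"
  obtain n' where n: "n = Suc n'" using assms(1,3) by (cases n) (auto simp: Idn_def)
  have "A \<in> Idn d n'" using assms(1) \<open>n \<notin> A\<close> n by (auto simp: Idn_def le_Suc_eq)
  then have "2 * \<Sum>A + d * d \<le> d * (2 * n' + 1)" by (rule Idn_sum_upper)
  then show False using assms(2,3) n by simp
qed

lemma Idn_mem_iff_Max:
  assumes "A \<in> Idn d n" and "0 < d"
  shows "n \<in> A \<longleftrightarrow> Max A = n"
proof -
  have "finite A" using assms(1) by (rule Idn_finite)
  have "A \<subseteq> {1..n}" and "A \<noteq> {}" using assms by (auto simp: Idn_def)
  show ?thesis
  proof
    assume "n \<in> A"
    then show "Max A = n" using \<open>finite A\<close> \<open>A \<subseteq> {1..n}\<close> by (intro Max_eqI) auto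
  next
    assume "Max A = n"
    then show "n \<in> A" using Max_in[OF \<open>finite A\<close> \<open>A \<noteq> {}\<close>] by simp
  qed
qed

lemma Idn_Max_le:
  assumes "A \<in> Idn d n" and "0 < d"
  shows "Max A \<le> n"
proof -
  have "finite A" using assms(1) by (rule Idn_finite)
  moreover have "A \<subseteq> {1..n}" and "A \<noteq> {}" using assms by (auto simp: Idn_def)
  ultimately show ?thesis using Max_in by fastforce
qed

lemma idx_le_Idn_mem:
  assumes A: "A \<in> Idn d n" and B: "B \<in> Idn d n" and "0 < d" and "idx_le A B" and "n \<in> A"
  shows "n \<in> B"
proof -
  have "A \<noteq> {}" using \<open>n \<in> A\<close> by blast
  then have "Max A \<le> Max B"
    using idx_le_Max_le[OF Idn_finite[OF A] Idn_finite[OF B]] \<open>idx_le A B\<close> by blast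
  moreover have "Max A = n" using Idn_mem_iff_Max[OF A \<open>0 < d\<close>] \<open>n \<in> A\<close> by simp
  moreover have "Max B \<le> n" using B \<open>0 < d\<close> by (rule Idn_Max_le)
  ultimately show ?thesis using Idn_mem_iff_Max[OF B \<open>0 < d\<close>] by simp
qed

lemma strict_incr_gap:
  fixes s :: "nat \<Rightarrow> nat"
  assumes incr: "\<forall>h<r. s h < s (Suc h)" and "i \<le> j" and "j \<le> r"
  shows "s i + (j - i) \<le> s j"
  using assms(2,3)
proof (induction j)
  case (Suc j)
  show ?case
  proof (cases "i = Suc j")
    case False
    with Suc have "s i + (j - i) \<le> s j" and "s j < s (Suc j)" using incr by auto
    then show ?thesis using False Suc.prems by linarith
  qed simp
qed simp

lemma ex_threshold:
  fixes P :: "nat \<Rightarrow> bool"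
  assumes "\<not> P 0" and "P r" and up: "\<forall>h<r. P h \<longrightarrow> P (Suc h)"
  shows "\<exists>k<r. (\<forall>h\<le>k. \<not> P h) \<and> (\<forall>h. k < h \<and> h \<le> r \<longrightarrow> P h)"
proof -
  define m where "m = (LEAST h. P h)"
  have "P m" and "m \<le> r" using \<open>P r\<close> by (auto simp: m_def intro: LeastI Least_le)
  then obtain k where m: "m = Suc k" using assms(1) by (cases m) auto
  have "\<not> P h" if "h \<le> k" for h using that m not_less_Least[of h P] by (simp add: m_def)
  moreover have "P h" if "m \<le> h" "h \<le> r" for h
    using that by (induction h rule: dec_induct) (use \<open>P m\<close> up in auto)
  ultimately show ?thesis using \<open>m \<le> r\<close> m by (auto intro!: exI[of _ k])
qed

lemma chain_sum_steps:
  assumes "d \<le> n" and r: "r = d * (n - d)" and Idn: "\<forall>h\<le>r. ch h \<in> Idn d n"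
    and lt: "\<forall>h<r. idx_lt (ch h) (ch (Suc h))"
  shows "2 * \<Sum>(ch 0) = d * (d + 1)" and "2 * \<Sum>(ch r) + d * d = d * (2 * n + 1)"
    and "\<forall>h<r. \<Sum>(ch (Suc h)) = Suc (\<Sum>(ch h))"
proof -
  define s where "s h = \<Sum>(ch h)" for h
  have fin: "finite (ch h)" if "h \<le> r" for h using Idn that Idn_finite by blast
  have incr: "\<forall>h<r. s h < s (Suc h)"
    using idx_lt_sum_less[OF fin fin] lt by (simp add: s_def)
  have gap: "s i + (j - i) \<le> s j" if "i \<le> j" "j \<le> r" for i j
    using strict_incr_gap[OF incr that] .
  have lower: "d * d + d \<le> 2 * s 0"
    using Idn_sum_lower[of "ch 0" d n] Idn by (simp add: s_def algebra_simps)
  have upper: "2 * s r + d * d \<le> 2 * (d * n) + d"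
    using Idn_sum_upper[of "ch r" d n] Idn by (simp add: s_def algebra_simps)
  have "d * n = r + d * d" using assms(1) r by (simp add: diff_mult_distrib2)
  moreover have "s 0 + r \<le> s r" using gap[of 0 r] by simp
  ultimately have "2 * s 0 = d * d + d" and sr: "s r = s 0 + r"
    and "2 * s r + d * d = 2 * (d * n) + d"
    using lower upper by linarith+
  then show "2 * \<Sum>(ch 0) = d * (d + 1)" and "2 * \<Sum>(ch r) + d * d = d * (2 * n + 1)"
    by (simp_all add: s_def algebra_simps)
  show "\<forall>h<r. \<Sum>(ch (Suc h)) = Suc (\<Sum>(ch h))"
  proof (intro allI impI)
    fix h assume "h < r"
    have "s 0 + h \<le> s h" and "s (Suc h) + (r - Suc h) \<le> s r" and "s h < s (Suc h)"
      using gap[of 0 h] gap[of "Suc h" r] incr \<open>h < r\<close> by simp_all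
    then show "\<Sum>(ch (Suc h)) = Suc (\<Sum>(ch h))" using sr \<open>h < r\<close> unfolding s_def by linarith
  qed
qed

lemma idx_le_Idn_enter_top:
  assumes A: "A \<in> Idn d n" and B: "B \<in> Idn d n" and "0 < d" and "idx_le A B"
    and "\<Sum>B = Suc (\<Sum>A)" and "n \<notin> A" and "n \<in> B"
  shows "sorted_list_of_set A ! (d - 1) = n - 1"
    and "B = set (butlast (sorted_list_of_set A)) \<union> {n}"
proof -
  have "Max A \<noteq> n" using Idn_mem_iff_Max[OF A \<open>0 < d\<close>] \<open>n \<notin> A\<close> by simp
  then have "Max A < n" using Idn_Max_le[OF A \<open>0 < d\<close>] by simp
  moreover have "Max B = n" using Idn_mem_iff_Max[OF B \<open>0 < d\<close>] \<open>n \<in> B\<close> by simp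
  moreover have "A \<noteq> {}" and "card A = d" using A \<open>0 < d\<close> by (auto simp: Idn_def)
  ultimately have "n = Suc (Max A)"
    and "B = set (butlast (sorted_list_of_set A)) \<union> {Suc (Max A)}"
    using idx_le_sum_Suc[OF Idn_finite[OF A] Idn_finite[OF B]] assms(4,5) by simp_all
  moreover have "sorted_list_of_set A ! (d - 1) = Max A"
    using nth_sorted_list_of_set_card_Max[OF Idn_finite[OF A] \<open>A \<noteq> {}\<close>] \<open>card A = d\<close> by simp
  ultimately show "sorted_list_of_set A ! (d - 1) = n - 1"
    and "B = set (butlast (sorted_list_of_set A)) \<union> {n}" by simp_all
qed

theorem proposition2p8:
  fixes d n r :: nat and ch :: "nat \<Rightarrow> nat set"
  assumes "1 \<le> d" and "d < n" and "r = d * (n - d)"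
    and "is_maximal_chain d n (ch ` {0..r})"
    and "\<forall>h<r. idx_lt (ch h) (ch (Suc h))"
  shows "\<exists>k<r. (\<forall>h\<le>k. n \<notin> ch h) \<and> (\<forall>h. k < h \<and> h \<le> r \<longrightarrow> n \<in> ch h) \<and>
           sorted_list_of_set (ch k) ! (d - 1) = n - 1 \<and>
           ch (Suc k) = set (butlast (sorted_list_of_set (ch k))) \<union> {n}"
proof -
  have "ch ` {0..r} \<subseteq> Idn d n"
    using assms(4) unfolding is_maximal_chain_def is_chain_in_def by blast
  then have Idn: "\<forall>h\<le>r. ch h \<in> Idn d n" by auto
  have "0 < d" using assms(1) by simp
  note sums = chain_sum_steps[OF less_imp_le[OF assms(2)] assms(3) Idn assms(5)]
  have "n \<notin> ch 0" using Idn_sum_min_notin[OF _ sums(1) assms(2)] Idn by simp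
  moreover have "n \<in> ch r" using Idn_sum_max_mem[OF _ sums(2) \<open>0 < d\<close>] Idn by simp
  moreover have "n \<in> ch (Suc h)" if "h < r" "n \<in> ch h" for h
    using idx_le_Idn_mem[of "ch h" d n "ch (Suc h)"] Idn assms(5) that \<open>0 < d\<close>
    by (simp add: idx_lt_def)
  ultimately obtain k where "k < r" and before: "\<forall>h\<le>k. n \<notin> ch h"
    and after: "\<forall>h. k < h \<and> h \<le> r \<longrightarrow> n \<in> ch h"
    using ex_threshold[of "\<lambda>h. n \<in> ch h" r] by blast
  moreover have "sorted_list_of_set (ch k) ! (d - 1) = n - 1"
    and "ch (Suc k) = set (butlast (sorted_list_of_set (ch k))) \<union> {n}"
    using idx_le_Idn_enter_top[of "ch k" d n "ch (Suc k)"] Idn assms(5) sums(3) \<open>0 < d\<close>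
      before after \<open>k < r\<close> by (simp_all add: idx_lt_def)
  ultimately show ?thesis by blast
qed

end
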